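(* Let $\mathcal G$ be a finite bipartite graph and $\Gamma=A(\mathcal G)$. Then for all $n\ge 1$, \[ s_n(\Gamma)\le \Pi(n)^{\alpha(\mathcal G)}\cdot n\cdot (n!)^{\alpha(\mathcal G)-1}. \]
   Context: $A(\mathcal G)=\langle\sigma_v,\ v\in\mathcal G\mid \sigma_v\sigma_w=\sigma_w\sigma_v \text{ for adjacent } v,w\rangle$ is the right-angled Artin group of the finite simple graph $\mathcal G$. $s_n(\Gamma)$ is the number of subgroups of index exactly $n$ in $\Gamma$. $\alpha(\mathcal G)$ is the independence number of $\mathcal G$, i.e. the maximal size of a set of pairwise non-adjacent vertices. $\Pi(n)$ is the number of partitions of the integer $n$. *)

theory Defs
  imports "HOL-Algebra.Coset" "HOL-Library.Multiset"
begin

definition simple_graph :: "'a set \<Rightarrow> ('a \<Rightarrow> 'a \<Rightarrow> bool) \<Rightarrow> bool" where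
  "simple_graph V E \<longleftrightarrow> finite V \<and> V \<noteq> {} \<and>
     (\<forall>v w. E v w \<longrightarrow> v \<in> V \<and> w \<in> V) \<and>
     (\<forall>v w. E v w \<longrightarrow> E w v) \<and> (\<forall>v. \<not> E v v)"

definition bipartite :: "'a set \<Rightarrow> ('a \<Rightarrow> 'a \<Rightarrow> bool) \<Rightarrow> bool" where
  "bipartite V E \<longleftrightarrow> (\<exists>A B. A \<union> B = V \<and> A \<inter> B = {} \<and>
     (\<forall>v w. E v w \<longrightarrow> (v \<in> A \<and> w \<in> B) \<or> (v \<in> B \<and> w \<in> A)))"

definition independent_set :: "'a set \<Rightarrow> ('a \<Rightarrow> 'a \<Rightarrow> bool) \<Rightarrow> 'a set \<Rightarrow> bool" where
  "independent_set V E S \<longleftrightarrow> S \<subseteq> V \<and> (\<forall>v\<in>S. \<forall>w\<in>S. \<not> E v w)"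

definition independence_number :: "'a set \<Rightarrow> ('a \<Rightarrow> 'a \<Rightarrow> bool) \<Rightarrow> nat" where
  "independence_number V E = Max {card S | S. independent_set V E S}"

definition num_partitions :: "nat \<Rightarrow> nat" where
  "num_partitions n = card {p :: nat multiset. 0 \<notin># p \<and> sum_mset p = n}"

text \<open>Words are lists of letters (v, b): (v, True) stands for sigma_v,
  (v, False) for its inverse.\<close>
type_synonym 'a letter = "'a \<times> bool"

inductive raag_step :: "'a set \<Rightarrow> ('a \<Rightarrow> 'a \<Rightarrow> bool) \<Rightarrow> 'a letter list \<Rightarrow> 'a letter list \<Rightarrow> bool"
  for V E where
  cancel: "v \<in> V \<Longrightarrow> raag_step V E (xs @ [(v, b), (v, \<not> b)] @ ys) (xs @ ys)"
| commute: "E v w \<Longrightarrow> raag_step V E (xs @ [(v, b), (w, c)] @ ys) (xs @ [(w, c), (v, b)] @ ys)"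

definition raag_words :: "'a set \<Rightarrow> 'a letter list set" where
  "raag_words V = lists (V \<times> UNIV)"

definition raag_rel :: "'a set \<Rightarrow> ('a \<Rightarrow> 'a \<Rightarrow> bool) \<Rightarrow> ('a letter list \<times> 'a letter list) set" where
  "raag_rel V E = {(x, y). x \<in> raag_words V \<and> y \<in> raag_words V \<and>
      (x, y) \<in> ({(a, b). raag_step V E a b} \<union> {(a, b). raag_step V E b a})\<^sup>*}"

definition RAAG :: "'a set \<Rightarrow> ('a \<Rightarrow> 'a \<Rightarrow> bool) \<Rightarrow> 'a letter list set monoid" where
  "RAAG V E = \<lparr> carrier = raag_words V // raag_rel V E,
     monoid.mult = (\<lambda>X Y. \<Union>{raag_rel V E `` {x @ y} | x y. x \<in> X \<and> y \<in> Y}),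
     one = raag_rel V E `` {[]} \<rparr>"

definition subgroups_of_index :: "('g, 'b) monoid_scheme \<Rightarrow> nat \<Rightarrow> 'g set set" where
  "subgroups_of_index G n = {H. subgroup H G \<and> card (rcosets\<^bsub>G\<^esub> H) = n}"

end

(* A subgroup H of index n, together with a labelling of its right cosets by
   0, ..., n-1 that gives H the label 0, is determined by the permutations by which the standard
   generators act on the labels: g lies in H iff g fixes 0, and the label of H g is the image of 0
   under g.  Every H has (n-1)! such labellings, so s_n * (n-1)! is at most the number of tuples
   of permutations in S_n that commute along the edges of the graph.
   For a bipartite graph, Hall's theorem matches the vertices outside a maximum independent set I
   injectively to neighbours in I, so such a tuple is encoded by one commuting pair per vertex of
   I.  A commuting pair (p, q) is determined by the cycle type of p and by q composed with a
   conjugator from a fixed representative of that type to p, so S_n has at most n! * Pi(n)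
   commuting pairs.  Hence s_n * (n-1)! <= (n! * Pi(n))^alpha. *)

theory Submission
  imports Defs "HOL-Combinatorics.Permutations" "HOL-Combinatorics.Orbits" "HOL-Algebra.Generated_Groups"
begin

section \<open>Cycle types and commuting pairs of permutations\<close>

definition cycle_type :: "('b \<Rightarrow> 'b) \<Rightarrow> 'b set \<Rightarrow> nat multiset" where
  "cycle_type f T = image_mset card (mset_set (orbit f ` T))"

lemma orbit_subset_of_image_subset:
  assumes "f ` T \<subseteq> T" "x \<in> T"
  shows "orbit f x \<subseteq> T"
proof
  fix y assume "y \<in> orbit f x"
  then show "y \<in> T" by induct (use assms in auto)
qed

lemma orbit_eq_of_mem_orbit: "permutation f \<Longrightarrow> y \<in> orbit f x \<Longrightarrow> orbit f y = orbit f x"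
  by (meson cyclic_on_orbit' orbit_cyclic_eq3)

lemma funpow_eq_iff_mod_card_orbit:
  assumes "permutation f"
  shows "(f ^^ i) x = (f ^^ j) x \<longleftrightarrow> i mod card (orbit f x) = j mod card (orbit f x)"
proof -
  have x: "x \<in> orbit f x" by (rule permutation_self_in_orbit[OF assms])
  define d where "d = funpow_dist1 f x x"
  have "orbit f x = (\<lambda>k. (f ^^ k) x) ` {0..<d}"
    unfolding d_def by (rule orbit_conv_funpow_dist1[OF x])
  moreover have inj: "inj_on (\<lambda>k. (f ^^ k) x) {0..<d}"
    unfolding d_def by (rule inj_on_funpow_dist1[OF x])
  ultimately have card: "card (orbit f x) = d" by (simp add: card_image)
  have period: "(f ^^ d) x = x" unfolding d_def by (rule funpow_dist1_prop[OF x])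
  have "(f ^^ i) x = (f ^^ j) x \<longleftrightarrow> (f ^^ (i mod d)) x = (f ^^ (j mod d)) x"
    using funpow_mod_eq[OF period] by metis
  also have "\<dots> \<longleftrightarrow> i mod d = j mod d"
    using inj by (auto simp: d_def inj_on_def)
  finally show ?thesis by (simp add: card)
qed

lemma conjugate_on_orbits_of_equal_card:
  assumes f: "permutation f" and g: "permutation g" and card: "card (orbit f x) = card (orbit g y)"
  shows "\<exists>\<rho>. bij_betw \<rho> (orbit f x) (orbit g y) \<and> (\<forall>z\<in>orbit f x. \<rho> (f z) = g (\<rho> z))"
proof -
  have same_period: "(f ^^ i) x = (f ^^ j) x \<longleftrightarrow> (g ^^ i) y = (g ^^ j) y" for i j
    using funpow_eq_iff_mod_card_orbit[OF f] funpow_eq_iff_mod_card_orbit[OF g] card by simp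
  have orb_f: "orbit f x = range (\<lambda>k. (f ^^ k) x)"
    using orbit_altdef_permutation[OF f] by auto
  have orb_g: "orbit g y = range (\<lambda>k. (g ^^ k) y)"
    using orbit_altdef_permutation[OF g] by auto
  define \<rho> where "\<rho> z = (g ^^ (SOME k. z = (f ^^ k) x)) y" for z
  have \<rho>: "\<rho> ((f ^^ k) x) = (g ^^ k) y" for k
  proof -
    have "(f ^^ k) x = (f ^^ (SOME j. (f ^^ k) x = (f ^^ j) x)) x"
      by (rule someI_ex) blast
    then show ?thesis unfolding \<rho>_def using same_period by metis
  qed
  have "inj_on \<rho> (orbit f x)"
    by (rule inj_onI) (auto simp: orb_f \<rho> same_period)
  moreover have "\<rho> ` orbit f x = orbit g y"
    unfolding orb_f orb_g image_image \<rho> ..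
  moreover have "\<rho> (f z) = g (\<rho> z)" if "z \<in> orbit f x" for z
    using that \<rho>[of "Suc _"] by (auto simp: orb_f \<rho>)
  ultimately show ?thesis unfolding bij_betw_def by blast
qed

lemma cycle_type_remove_orbit:
  assumes f: "permutation f" and T: "finite T" "f ` T = T" and x: "x \<in> T"
  shows "f ` orbit f x = orbit f x"
    and "f ` (T - orbit f x) = T - orbit f x"
    and "cycle_type f (T - orbit f x) = cycle_type f T - {#card (orbit f x)#}"
proof -
  have inj: "inj f" using f bij_is_inj permutation_bijective by blast
  have sub: "orbit f x \<subseteq> T" using orbit_subset_of_image_subset[of f T x] T x by simp
  show orbit: "f ` orbit f x = orbit f x"
  proof (rule endo_inj_surj)
    show "finite (orbit f x)" using sub T finite_subset by blast
    show "f ` orbit f x \<subseteq> orbit f x" by (auto intro: orbit.intros)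
    show "inj_on f (orbit f x)" using inj_on_subset[OF inj subset_UNIV] .
  qed
  show "f ` (T - orbit f x) = T - orbit f x" using image_set_diff[OF inj] orbit T by simp
  have "orbit f ` (T - orbit f x) = orbit f ` T - {orbit f x}"
    using permutation_self_in_orbit[OF f] orbit_eq_of_mem_orbit[OF f] by blast
  then show "cycle_type f (T - orbit f x) = cycle_type f T - {#card (orbit f x)#}"
    using x T by (simp add: cycle_type_def mset_set_Diff image_mset_Diff)
qed

lemma conjugacy_Un:
  assumes "bij_betw \<rho>1 A A'" "\<forall>z\<in>A. \<rho>1 (f z) = g (\<rho>1 z)" "f ` A = A"
    and "bij_betw \<rho>2 B B'" "\<forall>z\<in>B. \<rho>2 (f z) = g (\<rho>2 z)" "f ` B = B"
    and "A \<inter> B = {}" "A' \<inter> B' = {}"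
  shows "\<exists>\<rho>. bij_betw \<rho> (A \<union> B) (A' \<union> B') \<and> (\<forall>z\<in>A \<union> B. \<rho> (f z) = g (\<rho> z))"
proof -
  define \<rho> where "\<rho> z = (if z \<in> A then \<rho>1 z else \<rho>2 z)" for z
  have "bij_betw \<rho> A A'"
    using assms(1) by (rule bij_betw_cong[THEN iffD1, rotated]) (simp add: \<rho>_def)
  moreover have "bij_betw \<rho> B B'"
    using assms(4) by (rule bij_betw_cong[THEN iffD1, rotated]) (use assms(7) in \<open>auto simp: \<rho>_def\<close>)
  ultimately have "bij_betw \<rho> (A \<union> B) (A' \<union> B')"
    using assms(8) by (rule bij_betw_combine)
  moreover have "\<rho> (f z) = g (\<rho> z)" if "z \<in> A \<union> B" for z
    using that assms(2,3,5,6,7) by (auto simp: \<rho>_def)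
  ultimately show ?thesis by blast
qed

lemma conjugate_if_cycle_type_eq:
  assumes "permutation f" "finite T" "f ` T = T"
    and "permutation g" "finite T'" "g ` T' = T'"
    and "cycle_type f T = cycle_type g T'"
  shows "\<exists>\<rho>. bij_betw \<rho> T T' \<and> (\<forall>z\<in>T. \<rho> (f z) = g (\<rho> z))"
  using assms(2,3,5-7)
proof (induction "card T" arbitrary: T T' rule: less_induct)
  case less
  note f = assms(1) and g = assms(4)
  show ?case
  proof (cases "T = {}")
    case True
    then have "orbit g ` T' = {}"
      using less.prems by (simp add: cycle_type_def mset_set_empty_iff)
    then show ?thesis using True by (auto simp: bij_betw_def)
  next
    case False
    then obtain x where x: "x \<in> T" by auto
    then have "card (orbit f x) \<in># cycle_type g T'"
      unfolding less.prems(5)[symmetric] using less.prems(1) by (simp add: cycle_type_def)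
    then obtain y where y: "y \<in> T'" "card (orbit g y) = card (orbit f x)"
      using less.prems(3) by (auto simp: cycle_type_def)
    let ?O = "orbit f x" and ?O' = "orbit g y"
    note f_rem = cycle_type_remove_orbit[OF f less.prems(1,2) x]
    note g_rem = cycle_type_remove_orbit[OF g less.prems(3,4) y(1)]
    obtain \<rho>1 where \<rho>1: "bij_betw \<rho>1 ?O ?O'" "\<forall>z\<in>?O. \<rho>1 (f z) = g (\<rho>1 z)"
      using conjugate_on_orbits_of_equal_card[OF f g] y(2) by metis
    have "card (T - ?O) < card T"
      using less.prems(1) x permutation_self_in_orbit[OF f] by (intro psubset_card_mono) auto
    then obtain \<rho>2 where \<rho>2: "bij_betw \<rho>2 (T - ?O) (T' - ?O')" "\<forall>z\<in>T - ?O. \<rho>2 (f z) = g (\<rho>2 z)"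
      using less.hyps[of "T - ?O" "T' - ?O'"] less.prems f_rem g_rem y(2) by auto
    obtain \<rho> where "bij_betw \<rho> (?O \<union> (T - ?O)) (?O' \<union> (T' - ?O'))"
      "\<forall>z\<in>?O \<union> (T - ?O). \<rho> (f z) = g (\<rho> z)"
      using conjugacy_Un[OF \<rho>1 f_rem(1) \<rho>2 f_rem(2)] by blast
    moreover have "?O \<subseteq> T" "?O' \<subseteq> T'"
      using orbit_subset_of_image_subset less.prems x y by (metis order_refl)+
    ultimately show ?thesis by (metis Un_Diff_cancel Un_absorb1)
  qed
qed

definition perms :: "nat \<Rightarrow> (nat \<Rightarrow> nat) set" where
  "perms n = {p. p permutes {..<n}}"

definition commuting_pairs :: "nat \<Rightarrow> ((nat \<Rightarrow> nat) \<times> (nat \<Rightarrow> nat)) set" where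
  "commuting_pairs n = {(p, q). p \<in> perms n \<and> q \<in> perms n \<and> p \<circ> q = q \<circ> p}"

definition nat_partitions :: "nat \<Rightarrow> nat multiset set" where
  "nat_partitions n = {M. 0 \<notin># M \<and> sum_mset M = n}"

lemma finite_perms: "finite (perms n)"
  unfolding perms_def by (rule finite_permutations) auto

lemma card_perms: "card (perms n) = fact n"
  unfolding perms_def by (rule card_permutations) auto

lemma permutation_if_perms: "p \<in> perms n \<Longrightarrow> permutation p"
  unfolding perms_def permutation_permutes by blast

lemma finite_commuting_pairs: "finite (commuting_pairs n)"
  by (rule finite_subset[of _ "perms n \<times> perms n"]) (auto simp: commuting_pairs_def finite_perms)

lemma card_nat_partitions: "card (nat_partitions n) = num_partitions n"
  unfolding nat_partitions_def num_partitions_def ..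

lemma finite_nat_partitions: "finite (nat_partitions n)"
proof (rule finite_subset)
  show "nat_partitions n \<subseteq> (\<Union>k\<le>n. multisets_of_size {1..n} k)"
  proof
    fix M assume "M \<in> nat_partitions n"
    then have M: "0 \<notin># M" "sum_mset M = n" by (auto simp: nat_partitions_def)
    have "size M \<le> sum_mset M"
      using M(1) by (induction M) auto
    moreover have "x \<in> {1..n}" if "x \<in># M" for x
    proof -
      have "x \<le> sum_mset M" using sum_mset.remove[OF that] by simp
      then show ?thesis using that M by (cases x) auto
    qed
    ultimately show "M \<in> (\<Union>k\<le>n. multisets_of_size {1..n} k)"
      using M(2) by (auto simp: multisets_of_size_def)
  qed
  show "finite (\<Union>k\<le>n. multisets_of_size {1..n} k)"
    by (auto intro: finite_multisets_of_size)
qed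

lemma cycle_type_in_nat_partitions:
  assumes "permutation f" "finite T" "f ` T = T"
  shows "cycle_type f T \<in> nat_partitions (card T)"
  using assms(2,3)
proof (induction "card T" arbitrary: T rule: less_induct)
  case less
  show ?case
  proof (cases "T = {}")
    case True
    then show ?thesis by (simp add: cycle_type_def nat_partitions_def)
  next
    case False
    then obtain x where x: "x \<in> T" by auto
    let ?O = "orbit f x"
    note rem = cycle_type_remove_orbit[OF assms(1) less.prems x]
    have O: "?O \<subseteq> T" "?O \<noteq> {}"
      using orbit_subset_of_image_subset less.prems x orbit_nonempty by (metis order_refl)+
    have "card (T - ?O) < card T"
      using less.prems(1) x permutation_self_in_orbit[OF assms(1)] by (intro psubset_card_mono) auto
    then have IH: "cycle_type f (T - ?O) \<in> nat_partitions (card (T - ?O))"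
      using less.hyps less.prems(1) rem(2) by simp
    have in_type: "card ?O \<in># cycle_type f T"
      using x less.prems(1) by (simp add: cycle_type_def)
    have card_O: "card ?O > 0" using O less.prems(1) by (simp add: card_gt_0_iff finite_subset)
    have "cycle_type f T = add_mset (card ?O) (cycle_type f (T - ?O))"
      using rem(3) in_type by simp
    moreover have "card T = card ?O + card (T - ?O)"
      using O less.prems(1) by (metis card_Un_disjoint Diff_disjoint Un_Diff_cancel Un_absorb1 finite_Diff finite_subset)
    ultimately show ?thesis using IH card_O by (auto simp: nat_partitions_def)
  qed
qed

lemma conjugator_in_perms:
  assumes p: "p \<in> perms n" and r: "r \<in> perms n" and type: "cycle_type r {..<n} = cycle_type p {..<n}"
  shows "\<exists>\<rho>\<in>perms n. \<rho> \<circ> r = p \<circ> \<rho>"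
proof -
  have rp: "r permutes {..<n}" "p permutes {..<n}" using r p by (auto simp: perms_def)
  obtain \<rho> where \<rho>: "bij_betw \<rho> {..<n} {..<n}" "\<forall>z<n. \<rho> (r z) = p (\<rho> z)"
    using conjugate_if_cycle_type_eq[of r "{..<n}" p "{..<n}"] rp type
      permutation_if_perms[OF p] permutation_if_perms[OF r] by (auto simp: permutes_image)
  define \<rho>' where "\<rho>' z = (if z < n then \<rho> z else z)" for z
  have "bij_betw \<rho>' {..<n} {..<n}"
    using \<rho>(1) by (rule bij_betw_cong[THEN iffD1, rotated]) (simp add: \<rho>'_def)
  then have "\<rho>' permutes {..<n}" by (rule bij_imp_permutes) (simp add: \<rho>'_def)
  then have "\<rho>' \<in> perms n" by (simp add: perms_def)
  moreover have "\<rho>' (r z) = p (\<rho>' z)" for z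
    using \<rho>(2) rp permutes_in_image[OF rp(1)] permutes_not_in[OF rp(1)] permutes_not_in[OF rp(2)]
    by (cases "z < n") (auto simp: \<rho>'_def)
  ultimately show ?thesis by (metis comp_apply ext)
qed

lemma surj_if_perms: "p \<in> perms n \<Longrightarrow> surj p"
  using permutes_surj by (auto simp: perms_def)

lemma cycle_type_perms_in_nat_partitions: "p \<in> perms n \<Longrightarrow> cycle_type p {..<n} \<in> nat_partitions n"
  using cycle_type_in_nat_partitions[of p "{..<n}"] permutation_if_perms
  by (simp add: perms_def permutes_image)

lemma comp_commute_conjugator:
  assumes "p \<circ> q = q \<circ> p" "\<rho> \<circ> r = p \<circ> \<rho>"
  shows "p \<circ> (q \<circ> \<rho>) = (q \<circ> \<rho>) \<circ> r"
proof -
  have "p \<circ> (q \<circ> \<rho>) = q \<circ> (p \<circ> \<rho>)" using assms(1) by (metis comp_assoc)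
  also have "\<dots> = (q \<circ> \<rho>) \<circ> r" using assms(2) by (simp add: comp_assoc)
  finally show ?thesis .
qed

lemma commuting_pair_determined:
  assumes pq: "(p, q) \<in> commuting_pairs n" and pq': "(p', q') \<in> commuting_pairs n"
    and c: "c \<in> perms n" "c \<circ> r = p \<circ> c" and c': "c' \<in> perms n" "c' \<circ> r = p' \<circ> c'"
    and eq: "q \<circ> c = q' \<circ> c'"
  shows "p = p'"
proof -
  have "p \<circ> (q \<circ> c) = (q \<circ> c) \<circ> r"
    using pq c(2) by (intro comp_commute_conjugator) (auto simp: commuting_pairs_def)
  moreover have "p' \<circ> (q' \<circ> c') = (q' \<circ> c') \<circ> r"
    using pq' c'(2) by (intro comp_commute_conjugator) (auto simp: commuting_pairs_def)
  ultimately have "p \<circ> (q \<circ> c) = p' \<circ> (q \<circ> c)" using eq by simp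
  moreover have "q \<in> perms n" using pq by (simp add: commuting_pairs_def)
  then have "surj (q \<circ> c)" using c(1) by (intro comp_surj surj_if_perms)
  ultimately show ?thesis by (metis surj_fun_eq)
qed

lemma card_commuting_pairs_le: "card (commuting_pairs n) \<le> fact n * num_partitions n"
proof -
  let ?type = "\<lambda>p. cycle_type p {..<n}"
  define rep where "rep c = (SOME r. r \<in> perms n \<and> ?type r = c)" for c
  define conj where "conj p = (SOME \<rho>. \<rho> \<in> perms n \<and> \<rho> \<circ> rep (?type p) = p \<circ> \<rho>)" for p
  have rep: "rep (?type p) \<in> perms n \<and> ?type (rep (?type p)) = ?type p" if "p \<in> perms n" for p
    unfolding rep_def by (rule someI[of _ p]) (use that in simp)
  have conj: "conj p \<in> perms n \<and> conj p \<circ> rep (?type p) = p \<circ> conj p" if "p \<in> perms n" for p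
  proof -
    have "\<exists>\<rho>. \<rho> \<in> perms n \<and> \<rho> \<circ> rep (?type p) = p \<circ> \<rho>"
      using conjugator_in_perms[OF that] rep[OF that] by blast
    then show ?thesis unfolding conj_def by (rule someI_ex)
  qed
  define \<Phi> :: "(nat \<Rightarrow> nat) \<times> (nat \<Rightarrow> nat) \<Rightarrow> nat multiset \<times> (nat \<Rightarrow> nat)"
    where "\<Phi> = (\<lambda>(p, q). (?type p, q \<circ> conj p))"
  have "inj_on \<Phi> (commuting_pairs n)"
  proof (rule inj_onI, clarify)
    fix p q p' q'
    assume pq: "(p, q) \<in> commuting_pairs n" and pq': "(p', q') \<in> commuting_pairs n"
      and "\<Phi> (p, q) = \<Phi> (p', q')"
    then have type: "?type p = ?type p'" and \<mu>: "q \<circ> conj p = q' \<circ> conj p'"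
      by (auto simp: \<Phi>_def)
    have perms: "p \<in> perms n" "p' \<in> perms n" using pq pq' by (auto simp: commuting_pairs_def)
    have p: "p = p'"
      using conj[OF perms(1)] conj[OF perms(2)] type
      by (intro commuting_pair_determined[OF pq pq', of "conj p" "rep (?type p)" "conj p'"] \<mu>) auto
    moreover have "q = q'"
      using \<mu> surj_if_perms conj[OF perms(1)] unfolding p by (metis surj_fun_eq)
    ultimately show "p = p' \<and> q = q'" ..
  qed
  moreover have "\<Phi> (p, q) \<in> nat_partitions n \<times> perms n" if "(p, q) \<in> commuting_pairs n" for p q
  proof -
    have "p \<in> perms n" "q \<in> perms n" using that by (auto simp: commuting_pairs_def)
    then show ?thesis
      using conj cycle_type_perms_in_nat_partitions
      by (auto simp: \<Phi>_def perms_def intro: permutes_compose)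
  qed
  then have "\<Phi> ` commuting_pairs n \<subseteq> nat_partitions n \<times> perms n"
    by (intro image_subsetI) (metis surj_pair)
  ultimately have "card (commuting_pairs n) \<le> card (nat_partitions n \<times> perms n)"
    by (intro card_inj_on_le) (auto simp: finite_nat_partitions finite_perms)
  also have "\<dots> = fact n * num_partitions n"
    by (simp add: card_cartesian_product card_nat_partitions card_perms)
  finally show ?thesis .
qed

section \<open>Hall's theorem and bipartite graphs\<close>

lemma hall_condition_remove_critical:
  assumes hall: "\<forall>S\<subseteq>X. card S \<le> card (\<Union>(N ` S))"
    and fin: "finite X" "\<forall>x\<in>X. finite (N x)"
    and S: "S \<subseteq> X" "card (\<Union>(N ` S)) = card S"
  shows "\<forall>T\<subseteq>X - S. card T \<le> card (\<Union>x\<in>T. N x - \<Union>(N ` S))"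
proof (intro allI impI)
  fix T assume T: "T \<subseteq> X - S"
  have TS: "T \<union> S \<subseteq> X" using T S(1) by auto
  have fin_TS: "finite (T \<union> S)" using TS fin(1) finite_subset by blast
  then have fin_N: "finite (\<Union>(N ` (T \<union> S)))" using TS fin(2) by auto
  have "(\<Union>x\<in>T. N x - \<Union>(N ` S)) = \<Union>(N ` (T \<union> S)) - \<Union>(N ` S)" by auto
  then have "card (\<Union>x\<in>T. N x - \<Union>(N ` S)) = card (\<Union>(N ` (T \<union> S))) - card S"
    using fin_N S(2) by (simp add: card_Diff_subset finite_subset)
  moreover have "card (T \<union> S) \<le> card (\<Union>(N ` (T \<union> S)))" using hall TS by blast
  moreover have "card (T \<union> S) = card T + card S"
    using fin_TS T by (intro card_Un_disjoint) auto
  ultimately show "card T \<le> card (\<Union>x\<in>T. N x - \<Union>(N ` S))" by linarith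
qed

lemma hall_condition_remove_edge:
  assumes hall: "\<forall>S\<subseteq>X. card S \<le> card (\<Union>(N ` S))"
    and no_critical: "\<not> (\<exists>S\<subseteq>X. S \<noteq> {} \<and> S \<noteq> X \<and> card (\<Union>(N ` S)) = card S)"
    and x: "x \<in> X"
  shows "\<forall>T\<subseteq>X - {x}. card T \<le> card (\<Union>z\<in>T. N z - {y})"
proof (intro allI impI)
  fix T assume T: "T \<subseteq> X - {x}"
  show "card T \<le> card (\<Union>z\<in>T. N z - {y})"
  proof (cases "T = {}")
    case False
    have "T \<subseteq> X" "T \<noteq> X" using T x by auto
    then have "card T \<le> card (\<Union>(N ` T))" "card (\<Union>(N ` T)) \<noteq> card T"
      using hall no_critical False by auto
    moreover have "(\<Union>z\<in>T. N z - {y}) = \<Union>(N ` T) - {y}" by auto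
    ultimately show ?thesis by (auto simp: card_Diff_singleton_if)
  qed simp
qed

lemma distinct_representatives_Un:
  assumes "S \<subseteq> X" "inj_on f1 S" "\<forall>x\<in>S. f1 x \<in> N x"
    and "inj_on f2 (X - S)" "\<forall>x\<in>X - S. f2 x \<in> N x - f1 ` S"
  shows "\<exists>f. inj_on f X \<and> (\<forall>x\<in>X. f x \<in> N x)"
proof -
  define f where "f x = (if x \<in> S then f1 x else f2 x)" for x
  have "f1 ` S \<inter> f2 ` (X - S) = {}"
  proof (rule equals0I)
    fix y assume "y \<in> f1 ` S \<inter> f2 ` (X - S)"
    then obtain x where "x \<in> X - S" "y = f2 x" "y \<in> f1 ` S" by blast
    then show False using assms(5) by simp
  qed
  then have "inj_on f (S \<union> (X - S))"
    unfolding f_def by (rule inj_on_disjoint_Un[OF assms(2,4)])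
  moreover have "S \<union> (X - S) = X" using assms(1) by blast
  moreover have "\<forall>x\<in>X. f x \<in> N x" using assms(3,5) by (simp add: f_def)
  ultimately show ?thesis by auto
qed

theorem hall_marriage:
  fixes N :: "'x \<Rightarrow> 'y set"
  assumes "finite X" "\<forall>x\<in>X. finite (N x)" "\<forall>S\<subseteq>X. card S \<le> card (\<Union>(N ` S))"
  shows "\<exists>f. inj_on f X \<and> (\<forall>x\<in>X. f x \<in> N x)"
  using assms
proof (induction "card X" arbitrary: X N rule: less_induct)
  case less
  show ?case
  proof (cases "\<exists>S\<subseteq>X. S \<noteq> {} \<and> S \<noteq> X \<and> card (\<Union>(N ` S)) = card S")
    case True
    then obtain S where S: "S \<subseteq> X" "S \<noteq> {}" "S \<noteq> X" "card (\<Union>(N ` S)) = card S" by blast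
    have fin_S: "finite S" using S(1) less.prems(1) finite_subset by blast
    have "card S < card X" using S(1,3) less.prems(1) by (simp add: psubset_card_mono)
    moreover have "\<forall>x\<in>S. finite (N x)" "\<forall>T\<subseteq>S. card T \<le> card (\<Union>(N ` T))"
      using S(1) less.prems(2,3) by blast+
    ultimately have "\<exists>f. inj_on f S \<and> (\<forall>x\<in>S. f x \<in> N x)"
      using fin_S by (intro less.hyps)
    then obtain f1 where f1: "inj_on f1 S" "\<forall>x\<in>S. f1 x \<in> N x" by blast
    let ?N' = "\<lambda>x. N x - \<Union>(N ` S)"
    have "card (X - S) < card X"
      using S(1,2) less.prems(1) by (intro psubset_card_mono) auto
    moreover have "finite (X - S)" "\<forall>x\<in>X - S. finite (?N' x)" using less.prems(1,2) by blast+
    ultimately have "\<exists>f. inj_on f (X - S) \<and> (\<forall>x\<in>X - S. f x \<in> ?N' x)"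
      using hall_condition_remove_critical[OF less.prems(3,1,2) S(1,4)] by (rule less.hyps)
    then obtain f2 where f2: "inj_on f2 (X - S)" "\<forall>x\<in>X - S. f2 x \<in> ?N' x" by blast
    moreover have "\<forall>x\<in>X - S. f2 x \<in> N x - f1 ` S" using f1(2) f2(2) by blast
    ultimately show ?thesis by (intro distinct_representatives_Un[OF S(1) f1]) auto
  next
    case no_critical: False
    show ?thesis
    proof (cases "X = {}")
      case False
      then obtain x where x: "x \<in> X" by auto
      then have "card {x} \<le> card (\<Union>(N ` {x}))" using less.prems(3) by blast
      then obtain y where y: "y \<in> N x" by fastforce
      have "card (X - {x}) < card X" using x less.prems(1) by (rule card_Diff1_less[rotated])
      moreover have "finite (X - {x})" "\<forall>z\<in>X - {x}. finite (N z - {y})"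
        using less.prems(1,2) by blast+
      ultimately have "\<exists>f. inj_on f (X - {x}) \<and> (\<forall>z\<in>X - {x}. f z \<in> N z - {y})"
        using hall_condition_remove_edge[OF less.prems(3) no_critical x, of y] by (rule less.hyps)
      then obtain f2 where f2: "inj_on f2 (X - {x})" "\<forall>z\<in>X - {x}. f2 z \<in> N z - {y}" by blast
      then show ?thesis
        using x y by (intro distinct_representatives_Un[of "{x}" X "\<lambda>_. y" N f2]) auto
    qed simp
  qed
qed

lemma independence_number_attained:
  assumes "finite V"
  shows "\<exists>I. independent_set V E I \<and> card I = independence_number V E"
proof -
  let ?sizes = "{card S | S. independent_set V E S}"
  have "?sizes \<subseteq> card ` Pow V" by (auto simp: independent_set_def)
  then have fin: "finite ?sizes" using assms finite_subset by blast
  have "independent_set V E {}" by (simp add: independent_set_def)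
  then have "?sizes \<noteq> {}" by blast
  then show ?thesis using Max_in[OF fin] unfolding independence_number_def by auto
qed

lemma card_le_independence_number:
  assumes "finite V" "independent_set V E J"
  shows "card J \<le> independence_number V E"
proof -
  have "{card S | S. independent_set V E S} \<subseteq> card ` Pow V" by (auto simp: independent_set_def)
  then have "finite {card S | S. independent_set V E S}" using assms(1) finite_subset by blast
  then show ?thesis unfolding independence_number_def using assms(2) by (auto intro: Max_ge)
qed

lemma independence_number_ge_1:
  assumes "simple_graph V E"
  shows "independence_number V E \<ge> 1"
proof -
  obtain v where "v \<in> V" using assms by (auto simp: simple_graph_def)
  then have "independent_set V E {v}" using assms by (auto simp: independent_set_def simple_graph_def)
  then show ?thesis
    using card_le_independence_number assms by (fastforce simp: simple_graph_def)
qed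

lemma card_le_card_neighbours_in_max_independent:
  assumes V: "finite V" and sym: "\<And>v w. E v w \<Longrightarrow> E w v"
    and I: "independent_set V E I" "card I = independence_number V E"
    and S: "independent_set V E S" "S \<inter> I = {}"
  shows "card S \<le> card {i \<in> I. \<exists>s\<in>S. E s i}"
proof -
  let ?N = "{i \<in> I. \<exists>s\<in>S. E s i}"
  have fin: "finite I" "finite S" using I(1) S(1) V by (auto simp: independent_set_def finite_subset)
  have "\<not> E v w" if "v \<in> (I - ?N) \<union> S" "w \<in> (I - ?N) \<union> S" for v w
    using that I(1) S(1) sym[of v w] by (auto simp: independent_set_def)
  moreover have "I \<subseteq> V" "S \<subseteq> V" using I(1) S(1) by (simp_all add: independent_set_def)
  ultimately have "independent_set V E ((I - ?N) \<union> S)" unfolding independent_set_def by blast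
  then have "card ((I - ?N) \<union> S) \<le> card I"
    using card_le_independence_number[OF V] I(2) by simp
  moreover have "card ((I - ?N) \<union> S) = card (I - ?N) + card S"
    using fin S(2) by (intro card_Un_disjoint) auto
  moreover have "card (I - ?N) = card I - card ?N"
    using fin by (intro card_Diff_subset) auto
  moreover have "card ?N \<le> card I" using fin by (intro card_mono) auto
  ultimately show ?thesis by linarith
qed

lemma bipartite_hall_condition:
  assumes G: "simple_graph V E" and bip: "bipartite V E"
    and I: "independent_set V E I" "card I = independence_number V E" and S: "S \<subseteq> V - I"
  shows "card S \<le> card {i \<in> I. \<exists>s\<in>S. E s i}"
proof -
  let ?N = "\<lambda>T. {i \<in> I. \<exists>s\<in>T. E s i}"
  have V: "finite V" and sym: "\<And>v w. E v w \<Longrightarrow> E w v" using G by (auto simp: simple_graph_def)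
  obtain A B where AB: "A \<union> B = V" "A \<inter> B = {}"
    and edge: "\<And>v w. E v w \<Longrightarrow> (v \<in> A \<and> w \<in> B) \<or> (v \<in> B \<and> w \<in> A)"
    using bip unfolding bipartite_def by blast
  have fin: "finite S" "finite I" using S I(1) V by (auto simp: independent_set_def finite_subset)
  have "\<not> E v w" if "{v, w} \<subseteq> A \<or> {v, w} \<subseteq> B" for v w
    using that AB(2) edge[of v w] by blast
  then have "independent_set V E (S \<inter> A)" "independent_set V E (S \<inter> B)"
    using S by (auto simp: independent_set_def)
  then have "card (S \<inter> A) \<le> card (?N (S \<inter> A))" "card (S \<inter> B) \<le> card (?N (S \<inter> B))"
    using card_le_card_neighbours_in_max_independent[OF V sym I] S by auto
  moreover have "card S = card (S \<inter> A) + card (S \<inter> B)"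
  proof -
    have "S = (S \<inter> A) \<union> (S \<inter> B)" using S AB(1) by blast
    then have "card S = card ((S \<inter> A) \<union> (S \<inter> B))" by (rule arg_cong)
    also have "\<dots> = card (S \<inter> A) + card (S \<inter> B)" using fin AB(2) by (intro card_Un_disjoint) auto
    finally show ?thesis .
  qed
  moreover have "card (?N S) = card (?N (S \<inter> A)) + card (?N (S \<inter> B))"
  proof -
    have "?N (S \<inter> A) \<subseteq> B" "?N (S \<inter> B) \<subseteq> A" using edge AB(2) by blast+
    then have "?N (S \<inter> A) \<inter> ?N (S \<inter> B) = {}" using AB(2) by blast
    moreover have "?N S = ?N (S \<inter> A) \<union> ?N (S \<inter> B)" using S AB(1) by blast
    ultimately show ?thesis using fin by (simp add: card_Un_disjoint)
  qed
  ultimately show ?thesis by linarith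
qed

lemma bipartite_matching_into_max_independent:
  assumes G: "simple_graph V E" and bip: "bipartite V E"
    and I: "independent_set V E I" "card I = independence_number V E"
  shows "\<exists>m. inj_on m (V - I) \<and> (\<forall>c\<in>V - I. m c \<in> I \<and> E c (m c))"
proof -
  define N where "N c = {i \<in> I. E c i}" for c
  have V: "finite V" using G by (simp add: simple_graph_def)
  have "finite I" using I(1) V by (auto simp: independent_set_def finite_subset)
  moreover have "\<Union>(N ` S) = {i \<in> I. \<exists>s\<in>S. E s i}" for S by (auto simp: N_def)
  ultimately obtain m where "inj_on m (V - I)" "\<forall>c\<in>V - I. m c \<in> N c"
    using hall_marriage[of "V - I" N] bipartite_hall_condition[OF G bip I] V by (auto simp: N_def)
  then show ?thesis by (auto simp: N_def)
qed

text \<open>Tuples satisfying the defining relations of A(G), i.e. homomorphisms from A(G) to the symmetric group on \<open>{..<n}\<close>.\<close>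

definition commuting_perm_tuples :: "'a set \<Rightarrow> ('a \<Rightarrow> 'a \<Rightarrow> bool) \<Rightarrow> nat \<Rightarrow> ('a \<Rightarrow> nat \<Rightarrow> nat) set" where
  "commuting_perm_tuples V E n =
     {T \<in> V \<rightarrow>\<^sub>E perms n. \<forall>u w. E u w \<longrightarrow> T u \<circ> T w = T w \<circ> T u}"

lemma finite_commuting_perm_tuples: "finite V \<Longrightarrow> finite (commuting_perm_tuples V E n)"
  by (rule finite_subset[of _ "V \<rightarrow>\<^sub>E perms n"])
    (auto simp: commuting_perm_tuples_def finite_perms finite_PiE)

lemma card_commuting_perm_tuples_le_matching:
  assumes V: "finite V" and IV: "I \<subseteq> V"
    and m: "inj_on m (V - I)" "\<And>c. c \<in> V - I \<Longrightarrow> m c \<in> I \<and> E c (m c)"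
  shows "card (commuting_perm_tuples V E n) \<le> card (commuting_pairs n) ^ card I"
proof -
  let ?partner = "the_inv_into (V - I) m"
  \<comment> \<open>each vertex outside I is recorded together with its partner in I\<close>
  define \<Phi> where "\<Phi> T = (\<lambda>i\<in>I. (T i, if i \<in> m ` (V - I) then T (?partner i) else id))"
    for T :: "'a \<Rightarrow> nat \<Rightarrow> nat"
  have partner: "?partner (m c) = c" if "c \<in> V - I" for c
    using m(1) that by (rule the_inv_into_f_f)
  have "\<Phi> T \<in> I \<rightarrow>\<^sub>E commuting_pairs n" if T: "T \<in> commuting_perm_tuples V E n" for T
  proof -
    have perm: "T v \<in> perms n" if "v \<in> V" for v
      using T that by (auto simp: commuting_perm_tuples_def)
    have "(T i, T (?partner i)) \<in> commuting_pairs n" if "i \<in> m ` (V - I)" for i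
    proof -
      obtain c where c: "c \<in> V - I" "i = m c" using \<open>i \<in> m ` (V - I)\<close> by blast
      then have "T c \<circ> T i = T i \<circ> T c"
        using T m(2)[OF c(1)] by (auto simp: commuting_perm_tuples_def)
      moreover have "T i \<in> perms n" "T c \<in> perms n" using c m(2)[OF c(1)] perm IV by auto
      ultimately show ?thesis using partner[OF c(1)] c(2) by (simp add: commuting_pairs_def)
    qed
    moreover have "(T i, id) \<in> commuting_pairs n" if "i \<in> I" for i
      using perm[of i] IV that by (simp add: commuting_pairs_def perms_def permutes_id subset_iff)
    ultimately show ?thesis unfolding \<Phi>_def restrict_PiE_iff by simp
  qed
  then have "\<Phi> ` commuting_perm_tuples V E n \<subseteq> I \<rightarrow>\<^sub>E commuting_pairs n" by blast
  moreover have "inj_on \<Phi> (commuting_perm_tuples V E n)"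
  proof (rule inj_onI)
    fix T T' assume T: "T \<in> commuting_perm_tuples V E n" and T': "T' \<in> commuting_perm_tuples V E n"
      and eq: "\<Phi> T = \<Phi> T'"
    have "T v = T' v" if "v \<in> V" for v
    proof (cases "v \<in> I")
      case True
      then show ?thesis using fun_cong[OF eq, of v] by (simp add: \<Phi>_def)
    next
      case False
      then have "m v \<in> I" "m v \<in> m ` (V - I)" "?partner (m v) = v"
        using m(2)[of v] partner[of v] that by auto
      then show ?thesis using fun_cong[OF eq, of "m v"] by (simp add: \<Phi>_def)
    qed
    moreover have "T \<in> V \<rightarrow>\<^sub>E perms n" "T' \<in> V \<rightarrow>\<^sub>E perms n"
      using T T' by (simp_all add: commuting_perm_tuples_def)
    ultimately show "T = T'" by (metis PiE_ext)
  qed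
  ultimately have "card (commuting_perm_tuples V E n) \<le> card (I \<rightarrow>\<^sub>E commuting_pairs n)"
    using IV V by (intro card_inj_on_le) (auto simp: finite_PiE finite_commuting_pairs finite_subset)
  also have "\<dots> = card (commuting_pairs n) ^ card I"
    using IV V by (simp add: card_PiE finite_subset)
  finally show ?thesis .
qed

lemma card_commuting_perm_tuples_le:
  assumes G: "simple_graph V E" and bip: "bipartite V E"
  shows "card (commuting_perm_tuples V E n) \<le> card (commuting_pairs n) ^ independence_number V E"
proof -
  have V: "finite V" using G by (simp add: simple_graph_def)
  obtain I where I: "independent_set V E I" "card I = independence_number V E"
    using independence_number_attained[OF V] by blast
  obtain m where m: "inj_on m (V - I)" "\<And>c. c \<in> V - I \<Longrightarrow> m c \<in> I \<and> E c (m c)"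
    using bipartite_matching_into_max_independent[OF G bip I] by blast
  have IV: "I \<subseteq> V" using I(1) by (simp add: independent_set_def)
  have "card (commuting_perm_tuples V E n) \<le> card (commuting_pairs n) ^ card I"
    by (rule card_commuting_perm_tuples_le_matching[OF V IV m(1)]) (rule m(2))
  with I(2) show ?thesis by simp
qed

section \<open>The right-angled Artin group\<close>

definition raag_steps :: "'a set \<Rightarrow> ('a \<Rightarrow> 'a \<Rightarrow> bool) \<Rightarrow> ('a letter list \<times> 'a letter list) set" where
  "raag_steps V E = {(a, b). raag_step V E a b} \<union> {(a, b). raag_step V E b a}"

lemma raag_rel_eq:
  "raag_rel V E = {(x, y). x \<in> raag_words V \<and> y \<in> raag_words V \<and> (x, y) \<in> (raag_steps V E)\<^sup>*}"
  by (simp add: raag_rel_def raag_steps_def)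

lemma equiv_raag_rel: "equiv (raag_words V) (raag_rel V E)"
proof (rule equivI)
  show "raag_rel V E \<subseteq> raag_words V \<times> raag_words V" by (auto simp: raag_rel_def)
  show "refl_on (raag_words V) (raag_rel V E)" by (auto simp: raag_rel_def refl_on_def)
  have "sym (raag_steps V E)" by (auto simp: raag_steps_def sym_def)
  then show "sym (raag_rel V E)"
    using sym_rtrancl unfolding raag_rel_eq sym_def by blast
  show "trans (raag_rel V E)" unfolding raag_rel_def trans_def
    by (auto intro: rtrancl_trans)
qed

lemma raag_step_append: "raag_step V E a b \<Longrightarrow> raag_step V E (l @ a @ r) (l @ b @ r)"
proof (induction rule: raag_step.induct)
  case (cancel v xs b ys)
  then show ?case using raag_step.cancel[where xs = "l @ xs" and ys = "ys @ r"] by simp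
next
  case (commute v w xs b c ys)
  then show ?case using raag_step.commute[where xs = "l @ xs" and ys = "ys @ r"] by simp
qed

lemma raag_rel_append:
  assumes "(x, y) \<in> raag_rel V E" "u \<in> raag_words V" "v \<in> raag_words V"
  shows "(u @ x @ v, u @ y @ v) \<in> raag_rel V E"
proof -
  let ?R = "raag_steps V E"
  have "(u @ a @ v, u @ b @ v) \<in> ?R\<^sup>*" if "(a, b) \<in> ?R\<^sup>*" for a b
    using that
  proof (induction rule: rtrancl_induct)
    case (step y z)
    then have "(u @ y @ v, u @ z @ v) \<in> ?R" by (auto simp: raag_steps_def intro: raag_step_append)
    with step.IH show ?case by (rule rtrancl.rtrancl_into_rtrancl)
  qed simp
  then show ?thesis using assms by (auto simp: raag_rel_eq raag_words_def)
qed

definition raag_class :: "'a set \<Rightarrow> ('a \<Rightarrow> 'a \<Rightarrow> bool) \<Rightarrow> 'a letter list \<Rightarrow> 'a letter list set" where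
  "raag_class V E w = raag_rel V E `` {w}"

lemma carrier_RAAG: "carrier (RAAG V E) = raag_class V E ` raag_words V"
  by (auto simp: RAAG_def raag_class_def quotient_def)

lemma raag_class_in_carrier: "w \<in> raag_words V \<Longrightarrow> raag_class V E w \<in> carrier (RAAG V E)"
  by (simp add: carrier_RAAG)

lemma raag_class_Nil: "raag_class V E [] = \<one>\<^bsub>RAAG V E\<^esub>"
  by (simp add: RAAG_def raag_class_def)

lemma raag_class_eqI: "(x, y) \<in> raag_rel V E \<Longrightarrow> raag_class V E x = raag_class V E y"
  unfolding raag_class_def by (rule equiv_class_eq[OF equiv_raag_rel])

lemma raag_class_mult:
  assumes x: "x \<in> raag_words V" and y: "y \<in> raag_words V"
  shows "raag_class V E x \<otimes>\<^bsub>RAAG V E\<^esub> raag_class V E y = raag_class V E (x @ y)"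
proof -
  let ?R = "raag_rel V E"
  have "?R `` {x' @ y'} = ?R `` {x @ y}" if "(x, x') \<in> ?R" "(y, y') \<in> ?R" for x' y'
  proof -
    have "x' \<in> raag_words V" using that(1) by (auto simp: raag_rel_def)
    then have "([] @ x @ y, [] @ x' @ y) \<in> ?R" "(x' @ y @ [], x' @ y' @ []) \<in> ?R"
      using raag_rel_append[OF that(1), of "[]" y] raag_rel_append[OF that(2), of x' "[]"] y
      by (auto simp: raag_words_def)
    then have "(x @ y, x' @ y') \<in> ?R" using equiv_raag_rel[of V E] unfolding equiv_def trans_def by auto
    then show ?thesis by (rule equiv_class_eq[OF equiv_raag_rel, symmetric])
  qed
  moreover have "x \<in> ?R `` {x}" "y \<in> ?R `` {y}" using equiv_class_self[OF equiv_raag_rel] x y by auto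
  ultimately have "{?R `` {x' @ y'} | x' y'. x' \<in> ?R `` {x} \<and> y' \<in> ?R `` {y}} = {?R `` {x @ y}}"
    by blast
  then show ?thesis unfolding RAAG_def raag_class_def by simp
qed

definition inverse_word :: "'a letter list \<Rightarrow> 'a letter list" where
  "inverse_word w = rev (map (\<lambda>(v, b). (v, \<not> b)) w)"

lemma inverse_word_in_raag_words: "w \<in> raag_words V \<Longrightarrow> inverse_word w \<in> raag_words V"
  by (auto simp: inverse_word_def raag_words_def)

lemma raag_rel_inverse_word_append: "w \<in> raag_words V \<Longrightarrow> (inverse_word w @ w, []) \<in> raag_rel V E"
proof (induction w)
  case Nil
  then show ?case by (simp add: inverse_word_def raag_rel_def raag_words_def)
next
  case (Cons a w)
  obtain v b where a: "a = (v, b)" by (cases a)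
  have v: "v \<in> V" and w: "w \<in> raag_words V" using Cons.prems a by (auto simp: raag_words_def)
  have "raag_step V E (inverse_word w @ [(v, \<not> b), (v, \<not> \<not> b)] @ w) (inverse_word w @ w)"
    by (rule raag_step.cancel[OF v])
  then have "(inverse_word (a # w) @ a # w, inverse_word w @ w) \<in> raag_rel V E"
    using inverse_word_in_raag_words[OF Cons.prems] inverse_word_in_raag_words[OF w] Cons.prems w
    by (auto simp: raag_rel_def inverse_word_def a raag_words_def)
  then show ?case using Cons.IH[OF w] equiv_raag_rel[of V E] unfolding equiv_def trans_def by blast
qed

lemma group_RAAG: "group (RAAG V E)"
proof (rule groupI)
  fix x y z assume "x \<in> carrier (RAAG V E)" "y \<in> carrier (RAAG V E)" "z \<in> carrier (RAAG V E)"
  then obtain a b c where "x = raag_class V E a" "y = raag_class V E b" "z = raag_class V E c"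
    and "a \<in> raag_words V" "b \<in> raag_words V" "c \<in> raag_words V"
    by (auto simp: carrier_RAAG)
  then show "x \<otimes>\<^bsub>RAAG V E\<^esub> y \<in> carrier (RAAG V E)"
    and "x \<otimes>\<^bsub>RAAG V E\<^esub> y \<otimes>\<^bsub>RAAG V E\<^esub> z = x \<otimes>\<^bsub>RAAG V E\<^esub> (y \<otimes>\<^bsub>RAAG V E\<^esub> z)"
    by (simp_all add: raag_class_mult raag_class_in_carrier raag_words_def)
next
  show "\<one>\<^bsub>RAAG V E\<^esub> \<in> carrier (RAAG V E)"
    using raag_class_in_carrier[of "[]" V E] by (simp add: raag_class_Nil raag_words_def)
next
  fix x assume "x \<in> carrier (RAAG V E)"
  then obtain a where x: "x = raag_class V E a" "a \<in> raag_words V" by (auto simp: carrier_RAAG)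
  then show "\<one>\<^bsub>RAAG V E\<^esub> \<otimes>\<^bsub>RAAG V E\<^esub> x = x"
    by (simp add: raag_class_mult raag_words_def flip: raag_class_Nil)
  have "raag_class V E (inverse_word a) \<otimes>\<^bsub>RAAG V E\<^esub> x = \<one>\<^bsub>RAAG V E\<^esub>"
    using x raag_rel_inverse_word_append[OF x(2)]
    by (simp add: raag_class_mult inverse_word_in_raag_words raag_class_eqI flip: raag_class_Nil)
  then show "\<exists>y\<in>carrier (RAAG V E). y \<otimes>\<^bsub>RAAG V E\<^esub> x = \<one>\<^bsub>RAAG V E\<^esub>"
    using raag_class_in_carrier[OF inverse_word_in_raag_words[OF x(2)]] by blast
qed

definition raag_gen :: "'a set \<Rightarrow> ('a \<Rightarrow> 'a \<Rightarrow> bool) \<Rightarrow> 'a \<Rightarrow> 'a letter list set" where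
  "raag_gen V E v = raag_class V E [(v, True)]"

lemma raag_gen_in_carrier: "v \<in> V \<Longrightarrow> raag_gen V E v \<in> carrier (RAAG V E)"
  unfolding raag_gen_def by (rule raag_class_in_carrier) (simp add: raag_words_def)

lemma raag_class_inverse_letter:
  assumes "v \<in> V"
  shows "raag_class V E [(v, False)] = inv\<^bsub>RAAG V E\<^esub> raag_gen V E v"
proof -
  interpret group "RAAG V E" by (rule group_RAAG)
  have "raag_step V E ([] @ [(v, False), (v, \<not> False)] @ []) ([] @ [])"
    using assms by (rule raag_step.cancel)
  then have "raag_class V E [(v, False)] \<otimes>\<^bsub>RAAG V E\<^esub> raag_gen V E v = \<one>\<^bsub>RAAG V E\<^esub>"
    using assms by (auto simp: raag_gen_def raag_class_mult raag_words_def raag_rel_def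
        intro!: raag_class_eqI simp flip: raag_class_Nil)
  then show ?thesis
    using assms by (intro inv_equality[symmetric]) (auto intro: raag_class_in_carrier raag_gen_in_carrier
        simp: raag_words_def)
qed

lemma raag_gen_commute:
  assumes G: "simple_graph V E" and e: "E v w"
  shows "raag_gen V E v \<otimes>\<^bsub>RAAG V E\<^esub> raag_gen V E w = raag_gen V E w \<otimes>\<^bsub>RAAG V E\<^esub> raag_gen V E v"
proof -
  have vw: "v \<in> V" "w \<in> V" using G e by (auto simp: simple_graph_def)
  have "raag_step V E ([] @ [(v, True), (w, True)] @ []) ([] @ [(w, True), (v, True)] @ [])"
    using e by (rule raag_step.commute)
  then have "raag_class V E [(v, True), (w, True)] = raag_class V E [(w, True), (v, True)]"
    using vw by (auto simp: raag_words_def raag_rel_def intro!: raag_class_eqI)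
  then show ?thesis
    using vw by (simp add: raag_gen_def raag_class_mult raag_words_def)
qed

lemma generate_RAAG: "carrier (RAAG V E) = generate (RAAG V E) (raag_gen V E ` V)"
proof
  interpret group "RAAG V E" by (rule group_RAAG)
  show "generate (RAAG V E) (raag_gen V E ` V) \<subseteq> carrier (RAAG V E)"
    by (intro generate_incl image_subsetI raag_gen_in_carrier)
  have "raag_class V E w \<in> generate (RAAG V E) (raag_gen V E ` V)" if "w \<in> raag_words V" for w
    using that
  proof (induction w)
    case Nil
    then show ?case by (simp add: raag_class_Nil generate.one)
  next
    case (Cons a w)
    obtain v b where a: "a = (v, b)" by (cases a)
    have v: "v \<in> V" and w: "w \<in> raag_words V" using Cons.prems a by (auto simp: raag_words_def)
    have "raag_class V E [a] \<in> generate (RAAG V E) (raag_gen V E ` V)"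
    proof (cases b)
      case True
      then show ?thesis using v by (simp add: a generate.incl flip: raag_gen_def)
    next
      case False
      then show ?thesis using v by (simp add: a raag_class_inverse_letter generate.inv)
    qed
    then have "raag_class V E [a] \<otimes>\<^bsub>RAAG V E\<^esub> raag_class V E w \<in> generate (RAAG V E) (raag_gen V E ` V)"
      using Cons.IH[OF w] by (rule generate.eng)
    then show ?case using v w by (simp add: raag_class_mult a raag_words_def)
  qed
  then show "carrier (RAAG V E) \<subseteq> generate (RAAG V E) (raag_gen V E ` V)"
    by (auto simp: carrier_RAAG)
qed

section \<open>Labelled coset actions\<close>

definition coset_perm :: "('g, 'm) monoid_scheme \<Rightarrow> 'g set \<Rightarrow> nat \<Rightarrow> ('g set \<Rightarrow> nat) \<Rightarrow> 'g \<Rightarrow> nat \<Rightarrow> nat" where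
  "coset_perm G H n b g = (\<lambda>i. if i < n then b (the_inv_into (rcosets\<^bsub>G\<^esub> H) b i #>\<^bsub>G\<^esub> g) else i)"

definition coset_labellings :: "('g, 'm) monoid_scheme \<Rightarrow> 'g set \<Rightarrow> nat \<Rightarrow> ('g set \<Rightarrow> nat) set" where
  "coset_labellings G H n =
     {b \<in> extensional (rcosets\<^bsub>G\<^esub> H). bij_betw b (rcosets\<^bsub>G\<^esub> H) {..<n} \<and> b H = 0}"

context group
begin

lemma anti_hom_eq_on_generate:
  assumes S: "S \<subseteq> carrier G"
    and f: "\<And>x y. x \<in> carrier G \<Longrightarrow> y \<in> carrier G \<Longrightarrow> f (x \<otimes> y) = f y \<circ> f x" "f \<one> = id"
    and f': "\<And>x y. x \<in> carrier G \<Longrightarrow> y \<in> carrier G \<Longrightarrow> f' (x \<otimes> y) = f' y \<circ> f' x" "f' \<one> = id"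
    and eq: "\<And>s. s \<in> S \<Longrightarrow> f s = f' s"
    and x: "x \<in> generate G S"
  shows "f x = f' x"
  using x
proof induction
  case one
  then show ?case using f(2) f'(2) by simp
next
  case (incl h)
  then show ?case by (rule eq)
next
  case (inv h)
  then have h: "h \<in> carrier G" "inv h \<in> carrier G" using S by auto
  \<comment> \<open>\<open>f (inv h)\<close> and \<open>f' (inv h)\<close> are both inverse to \<open>f h = f' h\<close>\<close>
  have "f (inv h) = f (inv h) \<circ> (f' h \<circ> f' (inv h))"
    using f'(1)[OF h(2,1)] h f'(2) by simp
  also have "\<dots> = (f (inv h) \<circ> f h) \<circ> f' (inv h)"
    using eq[OF inv] by (simp add: comp_assoc)
  also have "\<dots> = f' (inv h)"
    using f(1)[OF h] h f(2) by simp
  finally show ?case .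
next
  case (eng h1 h2)
  then have "h1 \<in> carrier G" "h2 \<in> carrier G" using generate_in_carrier[OF S] by auto
  then show ?case using eng.IH f(1) f'(1) by simp
qed

lemma rcos_in_rcosets:
  assumes "subgroup H G" "C \<in> rcosets H" "g \<in> carrier G"
  shows "C #> g \<in> rcosets H"
proof -
  obtain a where a: "a \<in> carrier G" "C = H #> a" using assms(2) unfolding RCOSETS_def by auto
  then have "C #> g = H #> (a \<otimes> g)" using assms(1,3) by (simp add: coset_mult_assoc subgroup.subset)
  then show ?thesis using a assms by (simp add: rcosetsI subgroup.subset)
qed

lemma coset_perm_label:
  assumes b: "bij_betw b (rcosets H) {..<n}" and C: "C \<in> rcosets H"
  shows "coset_perm G H n b g (b C) = b (C #> g)"
proof -
  have "b C < n" using b C by (auto simp: bij_betw_def)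
  moreover have "the_inv_into (rcosets H) b (b C) = C" using b C by (simp add: bij_betw_def the_inv_into_f_f)
  ultimately show ?thesis by (simp add: coset_perm_def)
qed

lemma coset_perm_cases:
  assumes b: "bij_betw b (rcosets H) {..<n}"
  obtains "i \<ge> n" "coset_perm G H n b g i = i"
  | C where "C \<in> rcosets H" "i = b C"
  using assms by (cases "i < n") (auto simp: coset_perm_def bij_betw_def image_iff)

lemma coset_perm_one:
  assumes H: "subgroup H G" and b: "bij_betw b (rcosets H) {..<n}"
  shows "coset_perm G H n b \<one> = id"
proof
  fix i
  show "coset_perm G H n b \<one> i = id i"
  proof (cases rule: coset_perm_cases[OF b, of i \<one>])
    case (2 C)
    then show ?thesis
      using coset_perm_label[OF b] subgroup.rcosets_carrier[OF H is_group] by (simp add: coset_mult_one)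
  qed simp
qed

lemma coset_perm_mult:
  assumes H: "subgroup H G" and b: "bij_betw b (rcosets H) {..<n}"
    and g: "g \<in> carrier G" and h: "h \<in> carrier G"
  shows "coset_perm G H n b (g \<otimes> h) = coset_perm G H n b h \<circ> coset_perm G H n b g"
proof
  fix i
  show "coset_perm G H n b (g \<otimes> h) i = (coset_perm G H n b h \<circ> coset_perm G H n b g) i"
  proof (cases rule: coset_perm_cases[OF b, of i "g \<otimes> h"])
    case 1
    then show ?thesis by (simp add: coset_perm_def)
  next
    case (2 C)
    have "C #> g \<in> rcosets H" using rcos_in_rcosets[OF H 2(1) g] .
    moreover have "C #> g #> h = C #> (g \<otimes> h)"
      using subgroup.rcosets_carrier[OF H is_group 2(1)] g h by (simp add: coset_mult_assoc)
    ultimately show ?thesis using 2 coset_perm_label[OF b] by simp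
  qed
qed

lemma coset_perm_in_perms:
  assumes H: "subgroup H G" and b: "bij_betw b (rcosets H) {..<n}" and g: "g \<in> carrier G"
  shows "coset_perm G H n b g \<in> perms n"
proof -
  let ?p = "coset_perm G H n b"
  have "?p g \<circ> ?p (inv g) = id" "?p (inv g) \<circ> ?p g = id"
    using coset_perm_mult[OF H b] coset_perm_one[OF H b] g by (metis inv_closed l_inv r_inv)+
  then have "bij (?p g)" using o_bij by blast
  moreover have "?p g i = i" if "i \<notin> {..<n}" for i using that by (simp add: coset_perm_def)
  ultimately have "?p g permutes {..<n}" by (simp add: bij_iff permutes_def)
  then show ?thesis by (simp add: perms_def)
qed

lemma coset_perm_zero:
  assumes H: "subgroup H G" and b: "b \<in> coset_labellings G H n" and g: "g \<in> carrier G"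
  shows "coset_perm G H n b g 0 = b (H #> g)"
proof -
  have "H \<in> rcosets H" using subgroup.subgroup_in_rcosets[OF H is_group] .
  then show ?thesis
    using coset_perm_label[of b H n H g] b by (simp add: coset_labellings_def)
qed

lemma mem_iff_coset_perm_fixes_zero:
  assumes H: "subgroup H G" and b: "b \<in> coset_labellings G H n" and g: "g \<in> carrier G"
  shows "g \<in> H \<longleftrightarrow> coset_perm G H n b g 0 = 0"
proof -
  have Hs: "H \<subseteq> carrier G" using H by (rule subgroup.subset)
  have bij: "bij_betw b (rcosets H) {..<n}" and b0: "b H = 0" using b by (auto simp: coset_labellings_def)
  have HR: "H \<in> rcosets H" using subgroup.subgroup_in_rcosets[OF H is_group] .
  have "g \<in> H \<longleftrightarrow> H #> g = H"
    using coset_join1[OF _ g H] coset_join2[OF g H] by blast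
  also have "\<dots> \<longleftrightarrow> b (H #> g) = b H"
    using bij_betw_imp_inj_on[OF bij] rcosetsI[OF Hs g] HR by (auto dest: inj_onD)
  finally show ?thesis using coset_perm_zero[OF H b g] b0 by simp
qed

lemma coset_labelling_unique:
  assumes gen: "carrier G = generate G S"
    and H: "subgroup H G" "b \<in> coset_labellings G H n"
    and H': "subgroup H' G" "b' \<in> coset_labellings G H' n"
    and eq: "\<And>s. s \<in> S \<Longrightarrow> coset_perm G H n b s = coset_perm G H' n b' s"
  shows "H = H' \<and> b = b'"
proof -
  have bij: "bij_betw b (rcosets H) {..<n}" "bij_betw b' (rcosets H') {..<n}"
    using H(2) H'(2) by (auto simp: coset_labellings_def)
  have S: "S \<subseteq> carrier G" unfolding gen by (auto intro: generate.incl)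
  have same: "coset_perm G H n b g = coset_perm G H' n b' g" if "g \<in> carrier G" for g
    by (rule anti_hom_eq_on_generate[OF S _ _ _ _ eq that[unfolded gen]])
      (simp_all add: coset_perm_mult coset_perm_one H(1) H'(1) bij)
  have "g \<in> H \<longleftrightarrow> g \<in> H'" if "g \<in> carrier G" for g
    using mem_iff_coset_perm_fixes_zero[OF H that] mem_iff_coset_perm_fixes_zero[OF H' that] same[OF that]
    by simp
  then have "H = H'" using subgroup.subset[OF H(1)] subgroup.subset[OF H'(1)] by blast
  moreover have "b = b'"
  proof (rule extensionalityI)
    show "b \<in> extensional (rcosets H)" "b' \<in> extensional (rcosets H)"
      using H(2) H'(2) \<open>H = H'\<close> by (simp_all add: coset_labellings_def)
    fix C assume "C \<in> rcosets H"
    then obtain g where g: "g \<in> carrier G" "C = H #> g" unfolding RCOSETS_def by auto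
    then show "b C = b' C"
      using coset_perm_zero[OF H g(1)] coset_perm_zero[OF H' g(1)] same[OF g(1)] \<open>H = H'\<close> by simp
  qed
  ultimately show ?thesis ..
qed

lemma finite_coset_labellings: "finite (rcosets H) \<Longrightarrow> finite (coset_labellings G H n)"
proof (rule finite_subset)
  show "coset_labellings G H n \<subseteq> rcosets H \<rightarrow>\<^sub>E {..<n}"
    by (auto simp: coset_labellings_def bij_betw_def PiE_def)
qed (simp add: finite_PiE)

lemma coset_labelling_exists:
  assumes H: "subgroup H G" and card: "card (rcosets H) = n" and n: "n \<ge> 1"
  shows "\<exists>b. bij_betw b (rcosets H) {..<n} \<and> b H = 0"
proof -
  have fin_R: "finite (rcosets H)" using card n card.infinite by fastforce
  have HR: "H \<in> rcosets H" using subgroup.subgroup_in_rcosets[OF H is_group] .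
  obtain b0 where b0: "bij_betw b0 (rcosets H) {..<n}"
    using finite_same_card_bij[OF fin_R, of "{..<n}"] card by auto
  have "Transposition.transpose 0 (b0 H) permutes {..<n}"
    using n b0 HR by (intro permutes_swap_id) (auto simp: bij_betw_def)
  then have "bij_betw (Transposition.transpose 0 (b0 H) \<circ> b0) (rcosets H) {..<n}"
    using b0 by (auto intro: bij_betw_trans permutes_imp_bij)
  then show ?thesis by (intro exI[of _ "Transposition.transpose 0 (b0 H) \<circ> b0"]) simp
qed

lemma card_coset_labellings:
  assumes H: "subgroup H G" and card: "card (rcosets H) = n" and n: "n \<ge> 1"
  shows "fact (n - 1) \<le> card (coset_labellings G H n)"
proof -
  let ?R = "rcosets H"
  have "finite ?R" using card n card.infinite by fastforce
  then have fin: "finite (coset_labellings G H n)" by (rule finite_coset_labellings)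
  have HR: "H \<in> ?R" using subgroup.subgroup_in_rcosets[OF H is_group] .
  obtain b1 where b1: "bij_betw b1 ?R {..<n}" "b1 H = 0" using coset_labelling_exists[OF assms] by blast
  define F where "F \<pi> = restrict (\<pi> \<circ> b1) ?R" for \<pi> :: "nat \<Rightarrow> nat"
  have "F \<pi> \<in> coset_labellings G H n" if "\<pi> permutes {1..<n}" for \<pi>
  proof -
    have "\<pi> permutes {..<n}" using that by (rule permutes_subset) auto
    then have "bij_betw (\<pi> \<circ> b1) ?R {..<n}" using b1(1) by (auto intro: bij_betw_trans permutes_imp_bij)
    then show ?thesis
      using b1(2) HR permutes_not_in[OF that, of 0]
      by (auto simp: coset_labellings_def F_def cong: bij_betw_cong)
  qed
  moreover have "inj_on F {\<pi>. \<pi> permutes {1..<n}}"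
  proof (rule inj_onI)
    fix \<pi> \<pi>' assume \<pi>: "\<pi> \<in> {\<pi>. \<pi> permutes {1..<n}}" "\<pi>' \<in> {\<pi>. \<pi> permutes {1..<n}}"
      and eq: "F \<pi> = F \<pi>'"
    have "\<pi> i = \<pi>' i" if i: "i < n" for i
    proof -
      obtain C where C: "C \<in> ?R" "i = b1 C" using b1(1) i by (auto simp: bij_betw_def)
      have "F \<pi> C = F \<pi>' C" using eq by simp
      then show ?thesis using C by (simp add: F_def)
    qed
    moreover have "\<pi> i = \<pi>' i" if "\<not> i < n" for i
      using that permutes_not_in[of \<pi> "{1..<n}" i] permutes_not_in[of \<pi>' "{1..<n}" i] \<pi> by simp
    ultimately show "\<pi> = \<pi>'" by (meson ext)
  qed
  ultimately have "card {\<pi>. \<pi> permutes {1..<n}} \<le> card (coset_labellings G H n)"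
    using fin by (intro card_inj_on_le) auto
  then show ?thesis by (simp add: card_permutations)
qed

end

section \<open>Counting subgroups of finite index\<close>

definition generator_perms ::
    "'a set \<Rightarrow> ('a \<Rightarrow> 'a \<Rightarrow> bool) \<Rightarrow> nat \<Rightarrow> 'a letter list set set \<Rightarrow> ('a letter list set set \<Rightarrow> nat) \<Rightarrow> 'a \<Rightarrow> nat \<Rightarrow> nat"
  where "generator_perms V E n H b = (\<lambda>v\<in>V. coset_perm (RAAG V E) H n b (raag_gen V E v))"

lemma generator_perms_in_commuting_perm_tuples:
  assumes G: "simple_graph V E" and H: "subgroup H (RAAG V E)"
    and b: "bij_betw b (rcosets\<^bsub>RAAG V E\<^esub> H) {..<n}"
  shows "generator_perms V E n H b \<in> commuting_perm_tuples V E n"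
proof -
  interpret group "RAAG V E" by (rule group_RAAG)
  let ?p = "\<lambda>v. coset_perm (RAAG V E) H n b (raag_gen V E v)"
  have "?p v \<circ> ?p w = ?p w \<circ> ?p v" if e: "E v w" for v w
  proof -
    have "v \<in> V" "w \<in> V" using G e by (auto simp: simple_graph_def)
    then show ?thesis
      using coset_perm_mult[OF H b] raag_gen_in_carrier[of _ V E] raag_gen_commute[OF G e] by metis
  qed
  moreover have "E v w \<Longrightarrow> v \<in> V \<and> w \<in> V" for v w using G by (simp add: simple_graph_def)
  ultimately show ?thesis
    using coset_perm_in_perms[OF H b] raag_gen_in_carrier[of _ V E]
    by (auto simp: commuting_perm_tuples_def generator_perms_def)
qed

lemma inj_on_generator_perms:
  "inj_on (\<lambda>(H, b). generator_perms V E n H b)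
     (SIGMA H:{H. subgroup H (RAAG V E)}. coset_labellings (RAAG V E) H n)"
proof (rule inj_onI, clarsimp)
  interpret group "RAAG V E" by (rule group_RAAG)
  fix H b H' b'
  assume "subgroup H (RAAG V E)" "b \<in> coset_labellings (RAAG V E) H n"
    and "subgroup H' (RAAG V E)" "b' \<in> coset_labellings (RAAG V E) H' n"
    and eq: "generator_perms V E n H b = generator_perms V E n H' b'"
  moreover have "coset_perm (RAAG V E) H n b s = coset_perm (RAAG V E) H' n b' s"
    if s: "s \<in> raag_gen V E ` V" for s
  proof -
    obtain v where "v \<in> V" "s = raag_gen V E v" using s by blast
    then show ?thesis using fun_cong[OF eq, of v] by (simp add: generator_perms_def)
  qed
  ultimately show "H = H' \<and> b = b'"
    by (intro coset_labelling_unique[OF generate_RAAG]) auto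
qed

lemma card_subgroups_of_index_RAAG_le:
  assumes G: "simple_graph V E" and n: "n \<ge> 1"
  shows "finite (subgroups_of_index (RAAG V E) n)"
    and "card (subgroups_of_index (RAAG V E) n) * fact (n - 1) \<le> card (commuting_perm_tuples V E n)"
proof -
  interpret group "RAAG V E" by (rule group_RAAG)
  let ?S = "subgroups_of_index (RAAG V E) n"
  let ?P = "SIGMA H:?S. coset_labellings (RAAG V E) H n"
  let ?\<Phi> = "\<lambda>(H, b). generator_perms V E n H b"
  have H: "subgroup H (RAAG V E)" "card (rcosets\<^bsub>RAAG V E\<^esub> H) = n" if "H \<in> ?S" for H
    using that by (auto simp: subgroups_of_index_def)
  have labellings: "finite (coset_labellings (RAAG V E) H n)"
    "fact (n - 1) \<le> card (coset_labellings (RAAG V E) H n)" if "H \<in> ?S" for H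
  proof -
    have "finite (rcosets\<^bsub>RAAG V E\<^esub> H)" using H[OF that] n card.infinite by fastforce
    then show "finite (coset_labellings (RAAG V E) H n)" by (rule finite_coset_labellings)
    show "fact (n - 1) \<le> card (coset_labellings (RAAG V E) H n)"
      using card_coset_labellings[OF H[OF that] n] .
  qed
  have fin_T: "finite (commuting_perm_tuples V E n)"
    using G by (simp add: finite_commuting_perm_tuples simple_graph_def)
  have inj: "inj_on ?\<Phi> ?P"
    by (rule inj_on_subset[OF inj_on_generator_perms]) (auto simp: subgroups_of_index_def)
  have img: "?\<Phi> ` ?P \<subseteq> commuting_perm_tuples V E n"
    using generator_perms_in_commuting_perm_tuples[OF G] H by (auto simp: coset_labellings_def)
  have fin_P: "finite ?P" using finite_imageD[OF finite_subset[OF img fin_T] inj] .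
  have card_P: "card ?P \<le> card (commuting_perm_tuples V E n)" using card_inj_on_le[OF inj img fin_T] .
  have "coset_labellings (RAAG V E) H n \<noteq> {}" if "H \<in> ?S" for H
    using labellings(2)[OF that] fact_gt_zero[of "n - 1", where 'a = nat] by auto
  then have "?S = fst ` ?P" by force
  then show fin_S: "finite ?S" using finite_imageI[OF fin_P, of fst] by argo
  have "card ?S * fact (n - 1) \<le> (\<Sum>H\<in>?S. card (coset_labellings (RAAG V E) H n))"
    using sum_bounded_below[of ?S "fact (n - 1)" "\<lambda>H. card (coset_labellings (RAAG V E) H n)"]
      labellings(2) by simp
  also have "\<dots> = card ?P" using fin_S labellings(1) by (simp add: card_SigmaI)
  finally show "card ?S * fact (n - 1) \<le> card (commuting_perm_tuples V E n)" using card_P by linarith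
qed

lemma le_of_mult_fact_pred_le_power:
  fixes s p a n :: nat
  assumes "s * fact (n - 1) \<le> (fact n * p) ^ a" "n \<ge> 1" "a \<ge> 1"
  shows "s \<le> p ^ a * n * fact n ^ (a - 1)"
proof -
  obtain k where k: "a = Suc k" using assms(3) by (cases a) auto
  define F :: nat where "F = fact n"
  have F: "F = n * fact (n - 1)" using assms(2) by (simp add: F_def fact_reduce)
  have "(F * p) ^ a = F * (p ^ a * F ^ k)" by (simp add: k power_mult_distrib)
  also have "\<dots> = fact (n - 1) * (p ^ a * n * F ^ (a - 1))" by (simp add: k F)
  finally have "(fact n * p) ^ a = fact (n - 1) * (p ^ a * n * fact n ^ (a - 1))" by (simp add: F_def)
  then show ?thesis using assms(1) by (simp add: mult.commute[of s])
qed

theorem mainTheorem6: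
  fixes V :: "'a set" and E :: "'a \<Rightarrow> 'a \<Rightarrow> bool" and n :: nat
  assumes "simple_graph V E" and "bipartite V E" and "n \<ge> 1"
  shows "finite (subgroups_of_index (RAAG V E) n) \<and>
         card (subgroups_of_index (RAAG V E) n)
           \<le> num_partitions n ^ independence_number V E * n
              * (fact n) ^ (independence_number V E - 1)"
proof
  show "finite (subgroups_of_index (RAAG V E) n)"
    using card_subgroups_of_index_RAAG_le(1)[OF assms(1,3)] .
  have "card (subgroups_of_index (RAAG V E) n) * fact (n - 1) \<le> card (commuting_perm_tuples V E n)"
    using card_subgroups_of_index_RAAG_le(2)[OF assms(1,3)] .
  also have "\<dots> \<le> card (commuting_pairs n) ^ independence_number V E"
    using card_commuting_perm_tuples_le[OF assms(1,2)] .
  also have "\<dots> \<le> (fact n * num_partitions n) ^ independence_number V E"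
    using card_commuting_pairs_le by (rule power_mono) simp
  finally show "card (subgroups_of_index (RAAG V E) n)
      \<le> num_partitions n ^ independence_number V E * n * fact n ^ (independence_number V E - 1)"
    using le_of_mult_fact_pred_le_power assms(3) independence_number_ge_1[OF assms(1)] by blast
qed

end
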